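(* Assume (A1) and (A2), and let $\alpha>0$ be arbitrary. Along every trajectory of the algorithm described in the context, for all $k\ge0$, $$V_x(k+1)-V_x(k)\le-\tfrac12\bm e_x(k)^T\bm e_x(k)+\alpha^2\max_ib_{3i}\big(\|\bm e_\psi(k)\|^2+\|\bm e_\xi(k)\|^2+N\|\bm e_{\bar x}(k)\|^2\big).$$
   Context: Game. $N$ coalitions; coalition $i$ has agents $i1,\dots,in_i$; $\mathcal V_i=\{i1,\dots,in_i\}$, $\mathcal V=\bigcup_i\mathcal V_i$, $n_{\mathrm{sum}}=\sum_in_i$; agents ordered lexicographically. Agent $ij$ has state $x_{ij}\in\mathbb{R}$; $\bm x_i=(x_{i1},\dots,x_{in_i})^T$, $\bm x=(\bm x_1^T,\dots,\bm x_N^T)^T$. Costs $f_{ij}:\mathbb{R}^{n_{\mathrm{sum}}}\to\mathbb{R}$, $f_i=\sum_jf_{ij}$. For $\bm y\in\mathbb{R}^N$, $g_i(\bm y)=f_i((y_1\mathbf 1_{n_1}^T,\dots,y_N\mathbf 1_{n_N}^T)^T)$; $\bm y^*$ is the Nash equilibrium of the game $\min_{y_i}g_i(\bm y)$, $i=1,\dots,N$, and $\bm x^*=(y_1^*\mathbf 1_{n_1}^T,\dots,y_N^*\mathbf 1_{n_N}^T)^T$ (so $\mathbf 1_{n_i}^T\frac{\partial f_i}{\partial\bm x_i}(\bm x^* )=0$ for all $i$). Graph. Directed graph $\mathcal G=(\mathcal V,\mathcal E)$, $(pq,ij)\in\mathcal E$ meaning $ij$ receives from $pq$. $a_{ij}^{pq}=1$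 if $(pq,ij)\in\mathcal E$, $pq\ne ij$, else $0$; $d_{ij}=\sum_{pq}a_{ij}^{pq}$. $\mathcal G_i$: subgraph induced on $\mathcal V_i$. $\mathcal N_{ij}^{\mathrm{in}}$, $\mathcal N_{ij}^{i\text{-in}}$, $\mathcal N_{ij}^{i\text{-out}}$: in-neighbors in $\mathcal G$, in-neighbors and out-neighbors in $\mathcal G_i$. Assumptions. (A1) $\mathcal G$ and every $\mathcal G_i$ are strongly connected. (A2) each $f_{ij}$ is convex, $C^2$, with $\nabla f_{ij}$ Lipschitz of constant $l_{ij}$. Algorithm. Weights $r_{ij}^{im}>0$ for $im\in\mathcal N_{ij}^{i\text{-in}}\cup\{ij\}$ summing to 1, $c_{im}^{ij}>0$ for $im\in\mathcal N_{ij}^{i\text{-out}}\cup\{ij\}$ summing to 1, other within-coalition weights $0$; $R_i=[r_{ij}^{im}]$, $C_i=[c_{ij}^{im}]$ ($j$ row, $m$ column). Step size $\alpha>0$. Initialization: $x_{ij}(0),\bm\xi_{ij}(0)\in\mathbb{R}^{n_{\mathrm{sum}}}$ arbitrary, $\psi_{ij}^{il}(0)=\frac{\partial f_{ij}}{\partial x_{il}}(\bm\xi_{ij}(0))$. For $k\ge0$: $x_{ij}(k+1)=\sum_mr_{ij}^{im}x_{im}(k)-\frac{\alpha}{n_i}\sum_{m=1}^{n_i}\psi_{ij}^{im}(k)$; $\xi_{ij}^{pq}(k+1)=\xi_{ij}^{pq}(k)-\frac1{d_{ij}+a_{ij}^{pq}}\big(\sum_{lm\in\mathcal N_{ij}^{\mathrm{in}}}(\xi_{ij}^{pq}(k)-\xi_{lm}^{pq}(k))+a_{ij}^{pq}(\xi_{ij}^{pq}(k)-x_{pq}(k))\big)$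 for all $pq\in\mathcal V$; $\psi_{ij}^{il}(k+1)=\sum_mc_{ij}^{im}\psi_{im}^{il}(k)+\frac{\partial f_{ij}}{\partial x_{il}}(\bm\xi_{ij}(k+1))-\frac{\partial f_{ij}}{\partial x_{il}}(\bm\xi_{ij}(k))$. Auxiliary quantities. $u_i$: $u_i^TR_i=u_i^T$, $u_i^T\mathbf 1=n_i$; $v_i$: $C_iv_i=v_i$, $\mathbf 1^Tv_i=n_i$. $\bar R_i=R_i-\frac{\mathbf 1u_i^T}{n_i}$, $\bar I_{u_i}=I_{n_i}-\frac{\mathbf 1u_i^T}{n_i}$; $W_{R_i}$: symmetric positive definite solution of $\bar R_i^TW\bar R_i-W=-I_{n_i}$. Spectral matrix norms. $b_{0i}=n_i+(\frac1{n_i}+\max_kn_k)\|v_i\|^2\sum_{j=1}^{n_i}l_{ij}^2$, $b_{3i}=\frac1{n_i^2}(2\|\bar R_i^TW_{R_i}\bar I_{u_i}\|^2+\|\bar I_{u_i}^TW_{R_i}\bar I_{u_i}\|)b_{0i}$. Errors and Lyapunov function. $\bm\psi_i=(\psi_{i1}^{i1},\dots,\psi_{i1}^{in_i},\psi_{i2}^{i1},\dots,\psi_{in_i}^{in_i})^T$, $\bar{\bm\psi}_i=\frac1{n_i}(\mathbf 1^T\otimes I_{n_i})\bm\psi_i$, $\bm e_{\psi_i}=\bm\psi_i-v_i\otimes\bar{\bm\psi}_i$. $\bar x_i=u_i^T\bm x_i/n_i$, $e_{\bar x_i}=\bar x_i-y_i^*$, $\bm e_{x_i}=\bm x_i-\mathbf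 1_{n_i}\bar x_i$, $\bar{\bm X}=(\bar x_1\mathbf 1_{n_1}^T,\dots,\bar x_N\mathbf 1_{n_N}^T)^T$. $\bm\xi_i=(\bm\xi_{i1}^T,\dots,\bm\xi_{in_i}^T)^T$, $\bm e_{\xi_i}=\bm\xi_i-\mathbf 1_{n_i}\otimes\bar{\bm X}$. $\bm e_\psi,\bm e_{\bar x},\bm e_x,\bm e_\xi$: stacks over $i$. $V_x(k)=\sum_{i=1}^N\bm e_{x_i}(k)^TW_{R_i}\bm e_{x_i}(k)$. *)

theory Defs
  imports "HOL-Analysis.Analysis"
begin

(* Agents form a finite type 'a; coalitions form a finite type 'c;
   coal a is the coalition of agent a.  R^{n_sum} = real^'a. *)

definition Vc :: "('a \<Rightarrow> 'c) \<Rightarrow> 'c \<Rightarrow> 'a set" where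
  "Vc coal i = {a. coal a = i}"

definition nc :: "('a \<Rightarrow> 'c) \<Rightarrow> 'c \<Rightarrow> nat" where
  "nc coal i = card (Vc coal i)"

(* graph: (pq, ij) \<in> E means ij receives from pq *)
definition adj :: "('a \<times> 'a) set \<Rightarrow> 'a \<Rightarrow> 'a \<Rightarrow> real" where
  "adj E ij pq = (if (pq, ij) \<in> E \<and> pq \<noteq> ij then 1 else 0)"

definition deg :: "('a::finite \<times> 'a) set \<Rightarrow> 'a \<Rightarrow> real" where
  "deg E ij = (\<Sum>pq\<in>UNIV. adj E ij pq)"

definition in_nbrs :: "('a \<times> 'a) set \<Rightarrow> 'a \<Rightarrow> 'a set" where
  "in_nbrs E ij = {pq. (pq, ij) \<in> E \<and> pq \<noteq> ij}"

definition strongly_connected_on :: "'a set \<Rightarrow> ('a \<times> 'a) set \<Rightarrow> bool" where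
  "strongly_connected_on S E \<longleftrightarrow> (\<forall>a\<in>S. \<forall>b\<in>S. (a, b) \<in> (E \<inter> (S \<times> S))\<^sup>*)"

definition grad :: "(real^'n \<Rightarrow> real) \<Rightarrow> real^'n \<Rightarrow> real^'n" where
  "grad f x = (THE D. GDERIV f x :> D)"

definition pderiv :: "(real^'n \<Rightarrow> real) \<Rightarrow> real^'n \<Rightarrow> 'n \<Rightarrow> real" where
  "pderiv f x q = grad f x $ q"

definition C2 :: "(real^'n \<Rightarrow> real) \<Rightarrow> bool" where
  "C2 f \<longleftrightarrow> (\<exists>G H. (\<forall>x. GDERIV f x :> G x) \<and>
      (\<forall>x. (G has_derivative blinfun_apply (H x)) (at x)) \<and> continuous_on UNIV H)"

definition grad_lipschitz :: "(real^'n \<Rightarrow> real) \<Rightarrow> real \<Rightarrow> bool" where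
  "grad_lipschitz f L \<longleftrightarrow> (\<forall>x y. norm (grad f x - grad f y) \<le> L * norm (x - y))"

definition stackc :: "('a::finite \<Rightarrow> 'c) \<Rightarrow> ('c \<Rightarrow> real) \<Rightarrow> real^'a" where
  "stackc coal y = (\<chi> a. y (coal a))"

definition gcost :: "('a::finite \<Rightarrow> 'c) \<Rightarrow> ('a \<Rightarrow> real^'a \<Rightarrow> real) \<Rightarrow> 'c \<Rightarrow> ('c \<Rightarrow> real) \<Rightarrow> real" where
  "gcost coal f i y = (\<Sum>a\<in>Vc coal i. f a (stackc coal y))"

definition nash_eq :: "('a::finite \<Rightarrow> 'c) \<Rightarrow> ('a \<Rightarrow> real^'a \<Rightarrow> real) \<Rightarrow> ('c \<Rightarrow> real) \<Rightarrow> bool" where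
  "nash_eq coal f ys \<longleftrightarrow> (\<forall>i z. gcost coal f i ys \<le> gcost coal f i (ys(i := z)))"

(* weights: r a m = r_{ij}^{im}  (row a, column m);  c a m = c_{ij}^{im} (row a, column m) *)
definition weights_R :: "('a \<Rightarrow> 'c) \<Rightarrow> ('a \<times> 'a) set \<Rightarrow> ('a \<Rightarrow> 'a \<Rightarrow> real) \<Rightarrow> bool" where
  "weights_R coal E r \<longleftrightarrow>
     (\<forall>a m. coal m = coal a \<longrightarrow>
        (((m, a) \<in> E \<or> m = a) \<longrightarrow> r a m > 0) \<and> (\<not> ((m, a) \<in> E \<or> m = a) \<longrightarrow> r a m = 0)) \<and>
     (\<forall>a. (\<Sum>m\<in>Vc coal (coal a). r a m) = 1)"

definition weights_C :: "('a \<Rightarrow> 'c) \<Rightarrow> ('a \<times> 'a) set \<Rightarrow> ('a \<Rightarrow> 'a \<Rightarrow> real) \<Rightarrow> bool" where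
  "weights_C coal E c \<longleftrightarrow>
     (\<forall>a m. coal m = coal a \<longrightarrow>
        (((m, a) \<in> E \<or> m = a) \<longrightarrow> c a m > 0) \<and> (\<not> ((m, a) \<in> E \<or> m = a) \<longrightarrow> c a m = 0)) \<and>
     (\<forall>m. (\<Sum>a\<in>Vc coal (coal m). c a m) = 1)"

(* trajectory of the algorithm:
   xs k $ a = x_a(k),  xi k a $ pq = xi_a^pq(k),  psi k a b = psi_a^b(k) (b in the coalition of a) *)
definition trajectory ::
  "('a::finite \<Rightarrow> 'c) \<Rightarrow> ('a \<times> 'a) set \<Rightarrow> ('a \<Rightarrow> 'a \<Rightarrow> real) \<Rightarrow> ('a \<Rightarrow> 'a \<Rightarrow> real) \<Rightarrow>
   ('a \<Rightarrow> real^'a \<Rightarrow> real) \<Rightarrow> real \<Rightarrow>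
   (nat \<Rightarrow> real^'a) \<Rightarrow> (nat \<Rightarrow> 'a \<Rightarrow> real^'a) \<Rightarrow> (nat \<Rightarrow> 'a \<Rightarrow> 'a \<Rightarrow> real) \<Rightarrow> bool" where
  "trajectory coal E r c f \<alpha> xs xi psi \<longleftrightarrow>
     (\<forall>a b. coal b = coal a \<longrightarrow> psi 0 a b = pderiv (f a) (xi 0 a) b) \<and>
     (\<forall>k a. xs (Suc k) $ a =
        (\<Sum>m\<in>Vc coal (coal a). r a m * xs k $ m)
        - \<alpha> / real (nc coal (coal a)) * (\<Sum>m\<in>Vc coal (coal a). psi k a m)) \<and>
     (\<forall>k a pq. xi (Suc k) a $ pq =
        xi k a $ pq - 1 / (deg E a + adj E a pq) *
          ((\<Sum>lm\<in>in_nbrs E a. xi k a $ pq - xi k lm $ pq) + adj E a pq * (xi k a $ pq - xs k $ pq))) \<and>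
     (\<forall>k a b. coal b = coal a \<longrightarrow> psi (Suc k) a b =
        (\<Sum>m\<in>Vc coal (coal a). c a m * psi k m b)
        + pderiv (f a) (xi (Suc k) a) b - pderiv (f a) (xi k a) b)"

(* auxiliary vectors / matrices, coalition-wise (entries indexed by agents of coalition i) *)
definition left_perron :: "('a \<Rightarrow> 'c) \<Rightarrow> ('a \<Rightarrow> 'a \<Rightarrow> real) \<Rightarrow> ('a \<Rightarrow> real) \<Rightarrow> bool" where
  "left_perron coal r u \<longleftrightarrow>
     (\<forall>m. (\<Sum>j\<in>Vc coal (coal m). u j * r j m) = u m) \<and>
     (\<forall>i. (\<Sum>j\<in>Vc coal i. u j) = real (nc coal i))"

definition right_perron :: "('a \<Rightarrow> 'c) \<Rightarrow> ('a \<Rightarrow> 'a \<Rightarrow> real) \<Rightarrow> ('a \<Rightarrow> real) \<Rightarrow> bool" where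
  "right_perron coal c v \<longleftrightarrow>
     (\<forall>j. (\<Sum>m\<in>Vc coal (coal j). c j m * v m) = v j) \<and>
     (\<forall>i. (\<Sum>j\<in>Vc coal i. v j) = real (nc coal i))"

definition Rbar :: "('a \<Rightarrow> 'c) \<Rightarrow> ('a \<Rightarrow> 'a \<Rightarrow> real) \<Rightarrow> ('a \<Rightarrow> real) \<Rightarrow> 'a \<Rightarrow> 'a \<Rightarrow> real" where
  "Rbar coal r u j m = r j m - u m / real (nc coal (coal j))"

definition Ibar :: "('a \<Rightarrow> 'c) \<Rightarrow> ('a \<Rightarrow> real) \<Rightarrow> 'a \<Rightarrow> 'a \<Rightarrow> real" where
  "Ibar coal u j m = (if j = m then 1 else 0) - u m / real (nc coal (coal j))"

definition lyap_sol :: "('a \<Rightarrow> 'c) \<Rightarrow> ('a \<Rightarrow> 'a \<Rightarrow> real) \<Rightarrow> ('a \<Rightarrow> real) \<Rightarrow> ('a \<Rightarrow> 'a \<Rightarrow> real) \<Rightarrow> bool" where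
  "lyap_sol coal r u W \<longleftrightarrow>
     (\<forall>i. \<forall>j\<in>Vc coal i. \<forall>m\<in>Vc coal i. W j m = W m j) \<and>
     (\<forall>i z. (\<exists>j\<in>Vc coal i. z j \<noteq> 0) \<longrightarrow>
        (\<Sum>j\<in>Vc coal i. \<Sum>m\<in>Vc coal i. z j * W j m * z m) > 0) \<and>
     (\<forall>i. \<forall>j\<in>Vc coal i. \<forall>m\<in>Vc coal i.
        (\<Sum>p\<in>Vc coal i. \<Sum>q\<in>Vc coal i. Rbar coal r u p j * W p q * Rbar coal r u q m) - W j m
          = - (if j = m then 1 else 0))"

definition specnorm :: "'a set \<Rightarrow> ('a \<Rightarrow> 'a \<Rightarrow> real) \<Rightarrow> real" where
  "specnorm S M = Sup {sqrt (\<Sum>p\<in>S. (\<Sum>q\<in>S. M p q * z q)\<^sup>2) | z. (\<Sum>q\<in>S. (z q)\<^sup>2) \<le> 1}"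

definition tmul3 :: "'a set \<Rightarrow> ('a \<Rightarrow> 'a \<Rightarrow> real) \<Rightarrow> ('a \<Rightarrow> 'a \<Rightarrow> real) \<Rightarrow> ('a \<Rightarrow> 'a \<Rightarrow> real) \<Rightarrow> 'a \<Rightarrow> 'a \<Rightarrow> real" where
  "tmul3 S A B C j m = (\<Sum>p\<in>S. \<Sum>q\<in>S. A p j * B p q * C q m)"

definition b0 :: "('a \<Rightarrow> 'c::finite) \<Rightarrow> ('a \<Rightarrow> real) \<Rightarrow> ('a \<Rightarrow> real) \<Rightarrow> 'c \<Rightarrow> real" where
  "b0 coal v l i = real (nc coal i)
     + (1 / real (nc coal i) + real (Max (range (nc coal))))
       * (\<Sum>j\<in>Vc coal i. (v j)\<^sup>2) * (\<Sum>j\<in>Vc coal i. (l j)\<^sup>2)"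

definition b3 :: "('a \<Rightarrow> 'c::finite) \<Rightarrow> ('a \<Rightarrow> 'a \<Rightarrow> real) \<Rightarrow> ('a \<Rightarrow> real) \<Rightarrow> ('a \<Rightarrow> real) \<Rightarrow>
                  ('a \<Rightarrow> 'a \<Rightarrow> real) \<Rightarrow> ('a \<Rightarrow> real) \<Rightarrow> 'c \<Rightarrow> real" where
  "b3 coal r u v W l i = 1 / (real (nc coal i))\<^sup>2 *
     (2 * (specnorm (Vc coal i) (tmul3 (Vc coal i) (Rbar coal r u) W (Ibar coal u)))\<^sup>2
      + specnorm (Vc coal i) (tmul3 (Vc coal i) (Ibar coal u) W (Ibar coal u))) * b0 coal v l i"

definition xbar :: "('a::finite \<Rightarrow> 'c) \<Rightarrow> ('a \<Rightarrow> real) \<Rightarrow> real^'a \<Rightarrow> 'c \<Rightarrow> real" where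
  "xbar coal u x i = (\<Sum>j\<in>Vc coal i. u j * x $ j) / real (nc coal i)"

definition psibar :: "('a \<Rightarrow> 'c) \<Rightarrow> ('a \<Rightarrow> 'a \<Rightarrow> real) \<Rightarrow> 'a \<Rightarrow> real" where
  "psibar coal ps l = (\<Sum>j\<in>Vc coal (coal l). ps j l) / real (nc coal (coal l))"

definition e_psi_sq :: "('a::finite \<Rightarrow> 'c) \<Rightarrow> ('a \<Rightarrow> real) \<Rightarrow> ('a \<Rightarrow> 'a \<Rightarrow> real) \<Rightarrow> real" where
  "e_psi_sq coal v ps = (\<Sum>j\<in>UNIV. \<Sum>l\<in>Vc coal (coal j). (ps j l - v j * psibar coal ps l)\<^sup>2)"

definition e_xbar_sq :: "('a::finite \<Rightarrow> 'c::finite) \<Rightarrow> ('a \<Rightarrow> real) \<Rightarrow> real^'a \<Rightarrow> ('c \<Rightarrow> real) \<Rightarrow> real" where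
  "e_xbar_sq coal u x ys = (\<Sum>i\<in>UNIV. (xbar coal u x i - ys i)\<^sup>2)"

definition e_x :: "('a::finite \<Rightarrow> 'c) \<Rightarrow> ('a \<Rightarrow> real) \<Rightarrow> real^'a \<Rightarrow> 'a \<Rightarrow> real" where
  "e_x coal u x j = x $ j - xbar coal u x (coal j)"

definition e_xi_sq :: "('a::finite \<Rightarrow> 'c) \<Rightarrow> ('a \<Rightarrow> real) \<Rightarrow> real^'a \<Rightarrow> ('a \<Rightarrow> real^'a) \<Rightarrow> real" where
  "e_xi_sq coal u x xs = (\<Sum>j\<in>UNIV. \<Sum>pq\<in>UNIV. (xs j $ pq - xbar coal u x (coal pq))\<^sup>2)"

definition Vx :: "('a::finite \<Rightarrow> 'c::finite) \<Rightarrow> ('a \<Rightarrow> real) \<Rightarrow> ('a \<Rightarrow> 'a \<Rightarrow> real) \<Rightarrow> real^'a \<Rightarrow> real" where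
  "Vx coal u W x = (\<Sum>i\<in>UNIV. \<Sum>j\<in>Vc coal i. \<Sum>m\<in>Vc coal i. e_x coal u x j * W j m * e_x coal u x m)"

end

theory Submission
  imports Defs
begin

(* Inside coalition i the consensus error e = x - 1 xbar obeys
   e(k+1) = Rbar e(k) - (alpha/n_i) Ibar s(k) with s_j = sum_m psi_j^m, because u^T R = u^T.
   Expanding e^T W e with the Lyapunov equation Rbar^T W Rbar - W = -I leaves -|e|^2, a cross
   term and a term quadratic in s; Young's inequality pays for the cross term with half of |e|^2.
   To bound |s|^2, split s = (s - v T) + v T with T = sum_m psibar^m.  Since C is column
   stochastic, the column sums of psi track those of the gradients at the estimates xi_j, and at
   the Nash equilibrium the coalition's gradient sum vanishes; so n_i T is a sum of gradient
   differences between xi_j and x*, which the Lipschitz constants bound by |xi_j - x*|, and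
   hence by e_xi and e_xbar. *)

section \<open>Quadratic forms on a finite index set\<close>

definition mat_vec_on :: "'a set \<Rightarrow> ('a \<Rightarrow> 'a \<Rightarrow> real) \<Rightarrow> ('a \<Rightarrow> real) \<Rightarrow> 'a \<Rightarrow> real" where
  "mat_vec_on S A z j = (\<Sum>m\<in>S. A j m * z m)"

definition bilin_on :: "'a set \<Rightarrow> ('a \<Rightarrow> 'a \<Rightarrow> real) \<Rightarrow> ('a \<Rightarrow> real) \<Rightarrow> ('a \<Rightarrow> real) \<Rightarrow> real" where
  "bilin_on S W x y = (\<Sum>j\<in>S. \<Sum>m\<in>S. x j * W j m * y m)"

definition sqnorm_on :: "'a set \<Rightarrow> ('a \<Rightarrow> real) \<Rightarrow> real" where
  "sqnorm_on S z = (\<Sum>j\<in>S. (z j)\<^sup>2)"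

lemma sqnorm_on_nonneg: "0 \<le> sqnorm_on S z"
  unfolding sqnorm_on_def by (simp add: sum_nonneg)

lemma sqnorm_on_scale: "sqnorm_on S (\<lambda>j. c * z j) = c\<^sup>2 * sqnorm_on S z"
  unfolding sqnorm_on_def by (simp add: power_mult_distrib sum_distrib_left)

lemma sqnorm_on_eq_0_iff:
  assumes "finite S"
  shows "sqnorm_on S z = 0 \<longleftrightarrow> (\<forall>j\<in>S. z j = 0)"
  unfolding sqnorm_on_def using assms by (simp add: sum_nonneg_eq_0_iff)

lemma mat_vec_on_scale: "mat_vec_on S M (\<lambda>j. c * z j) = (\<lambda>j. c * mat_vec_on S M z j)"
  unfolding mat_vec_on_def by (simp add: fun_eq_iff sum_distrib_left mult_ac)

lemma abs_sum_mult_le_sqnorm_on: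
  "\<bar>\<Sum>j\<in>S. x j * z j\<bar> \<le> sqrt (sqnorm_on S x) * sqrt (sqnorm_on S z)"
proof -
  have "(\<Sum>j\<in>S. x j * z j)\<^sup>2 \<le> sqnorm_on S x * sqnorm_on S z"
    unfolding sqnorm_on_def by (rule Cauchy_Schwarz_ineq_sum)
  then show ?thesis
    by (metis real_sqrt_abs real_sqrt_le_mono real_sqrt_mult)
qed

lemma sq_sum_le_card_mult_sqnorm_on: "(\<Sum>j\<in>S. z j)\<^sup>2 \<le> real (card S) * sqnorm_on S z"
  using Cauchy_Schwarz_ineq_sum[of "\<lambda>_. 1" z S] by (simp add: sqnorm_on_def)

lemma bilin_on_mat_vec_on:
  "bilin_on S W (mat_vec_on S A x) (mat_vec_on S C y) = bilin_on S (tmul3 S A W C) x y"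
proof -
  have "bilin_on S W (mat_vec_on S A x) (mat_vec_on S C y)
      = (\<Sum>p\<in>S. \<Sum>q\<in>S. \<Sum>j\<in>S. \<Sum>m\<in>S. x j * (A p j * W p q * C q m) * y m)"
    unfolding bilin_on_def mat_vec_on_def by (simp add: sum_distrib_left sum_distrib_right mult_ac)
  also have "\<dots> = (\<Sum>p\<in>S. \<Sum>j\<in>S. \<Sum>q\<in>S. \<Sum>m\<in>S. x j * (A p j * W p q * C q m) * y m)"
    by (rule sum.cong[OF refl], rule sum.swap)
  also have "\<dots> = (\<Sum>j\<in>S. \<Sum>p\<in>S. \<Sum>m\<in>S. \<Sum>q\<in>S. x j * (A p j * W p q * C q m) * y m)"
    by (subst sum.swap) (rule sum.cong[OF refl], rule sum.cong[OF refl], rule sum.swap)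
  also have "\<dots> = (\<Sum>j\<in>S. \<Sum>m\<in>S. \<Sum>p\<in>S. \<Sum>q\<in>S. x j * (A p j * W p q * C q m) * y m)"
    by (rule sum.cong[OF refl], rule sum.swap)
  also have "\<dots> = bilin_on S (tmul3 S A W C) x y"
    unfolding bilin_on_def tmul3_def by (simp add: sum_distrib_left sum_distrib_right mult_ac)
  finally show ?thesis .
qed

lemma bilin_on_cong:
  assumes "\<And>j. j \<in> S \<Longrightarrow> x j = x' j" "\<And>j. j \<in> S \<Longrightarrow> y j = y' j"
  shows "bilin_on S W x y = bilin_on S W x' y'"
  unfolding bilin_on_def using assms by (intro sum.cong refl) auto

lemma bilin_on_diff_left: "bilin_on S W (\<lambda>j. x j - c * y j) z = bilin_on S W x z - c * bilin_on S W y z"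
  unfolding bilin_on_def by (simp add: algebra_simps sum_subtractf sum_distrib_left)

lemma bilin_on_diff_right: "bilin_on S W z (\<lambda>j. x j - c * y j) = bilin_on S W z x - c * bilin_on S W z y"
  unfolding bilin_on_def by (simp add: algebra_simps sum_subtractf sum_distrib_left)

lemma bilin_on_commute:
  assumes "\<And>j m. j \<in> S \<Longrightarrow> m \<in> S \<Longrightarrow> W j m = W m j"
  shows "bilin_on S W x y = bilin_on S W y x"
proof -
  have "bilin_on S W x y = (\<Sum>m\<in>S. \<Sum>j\<in>S. x j * W j m * y m)"
    unfolding bilin_on_def by (rule sum.swap)
  also have "\<dots> = bilin_on S W y x"
    unfolding bilin_on_def using assms by (intro sum.cong refl) (simp add: mult_ac)
  finally show ?thesis .
qed

lemma bilin_on_eq_sum_mat_vec_on: "bilin_on S M x y = (\<Sum>j\<in>S. x j * mat_vec_on S M y j)"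
  unfolding bilin_on_def mat_vec_on_def by (simp add: sum_distrib_left mult_ac)

lemma bilin_on_lyapunov:
  assumes "finite S"
    and "\<And>j m. j \<in> S \<Longrightarrow> m \<in> S \<Longrightarrow> tmul3 S R W R j m - W j m = - (if j = m then 1 else 0)"
  shows "bilin_on S (tmul3 S R W R) e e = bilin_on S W e e - sqnorm_on S e"
proof -
  have "bilin_on S (tmul3 S R W R) e e
      = (\<Sum>j\<in>S. \<Sum>m\<in>S. e j * W j m * e m - (if j = m then e j * e m else 0))"
    unfolding bilin_on_def
  proof (intro sum.cong refl)
    fix j m assume "j \<in> S" "m \<in> S"
    then have lyap: "tmul3 S R W R j m = W j m - (if j = m then 1 else 0)"
      using assms(2)[of j m] by linarith
    show "e j * tmul3 S R W R j m * e m = e j * W j m * e m - (if j = m then e j * e m else 0)"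
      unfolding lyap by (cases "j = m") (simp_all add: algebra_simps)
  qed
  also have "\<dots> = bilin_on S W e e - sqnorm_on S e"
    unfolding bilin_on_def sqnorm_on_def using assms(1)
    by (simp add: sum_subtractf power2_eq_square)
  finally show ?thesis .
qed

lemma bdd_above_specnorm_set:
  assumes "finite S"
  shows "bdd_above {sqrt (\<Sum>p\<in>S. (\<Sum>q\<in>S. M p q * z q)\<^sup>2) | z. (\<Sum>q\<in>S. (z q)\<^sup>2) \<le> 1}"
proof (rule bdd_aboveI)
  fix t assume "t \<in> {sqrt (\<Sum>p\<in>S. (\<Sum>q\<in>S. M p q * z q)\<^sup>2) | z. (\<Sum>q\<in>S. (z q)\<^sup>2) \<le> 1}"
  then obtain z where t: "t = sqrt (\<Sum>p\<in>S. (\<Sum>q\<in>S. M p q * z q)\<^sup>2)"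
    and z: "(\<Sum>q\<in>S. (z q)\<^sup>2) \<le> 1" by blast
  have "\<bar>z q\<bar> \<le> 1" if "q \<in> S" for q
  proof -
    have "(z q)\<^sup>2 \<le> (\<Sum>q\<in>S. (z q)\<^sup>2)"
      using assms that by (intro member_le_sum) auto
    with z show ?thesis by (metis abs_square_le_1 order_trans)
  qed
  then have "\<bar>\<Sum>q\<in>S. M p q * z q\<bar> \<le> (\<Sum>q\<in>S. \<bar>M p q\<bar>)" for p
    by (intro order_trans[OF sum_abs] sum_mono) (simp add: abs_mult mult_left_le)
  then have "(\<Sum>q\<in>S. M p q * z q)\<^sup>2 \<le> (\<Sum>q\<in>S. \<bar>M p q\<bar>)\<^sup>2" for p
    by (metis abs_ge_zero abs_le_square_iff abs_of_nonneg sum_nonneg)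
  then show "t \<le> sqrt (\<Sum>p\<in>S. (\<Sum>q\<in>S. \<bar>M p q\<bar>)\<^sup>2)"
    unfolding t by (intro real_sqrt_le_mono sum_mono)
qed

lemma specnorm_ge:
  assumes "finite S" and "sqnorm_on S z \<le> 1"
  shows "sqrt (sqnorm_on S (mat_vec_on S M z)) \<le> specnorm S M"
  unfolding specnorm_def using assms
  by (intro cSup_upper bdd_above_specnorm_set) (auto simp: sqnorm_on_def mat_vec_on_def)

lemma specnorm_nonneg: "finite S \<Longrightarrow> 0 \<le> specnorm S M"
  using specnorm_ge[of S "\<lambda>_. 0" M] by (simp add: sqnorm_on_def mat_vec_on_def)

lemma sqnorm_on_mat_vec_on_le:
  assumes "finite S"
  shows "sqnorm_on S (mat_vec_on S M z) \<le> (specnorm S M)\<^sup>2 * sqnorm_on S z"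
proof (cases "sqnorm_on S z = 0")
  case True
  with assms have "mat_vec_on S M z = (\<lambda>_. 0)"
    by (simp add: sqnorm_on_eq_0_iff mat_vec_on_def fun_eq_iff)
  with True show ?thesis by (simp add: sqnorm_on_def)
next
  case False
  define t where "t = sqnorm_on S z"
  have t: "t > 0" using False sqnorm_on_nonneg[of S z] unfolding t_def by linarith
  \<comment> \<open>apply the defining supremum to the unit vector \<open>z / |z|\<close>\<close>
  have "sqnorm_on S (\<lambda>j. (1 / sqrt t) * z j) = 1"
    using t unfolding sqnorm_on_scale by (simp add: power_divide t_def)
  then have "sqrt (sqnorm_on S (mat_vec_on S M (\<lambda>j. (1 / sqrt t) * z j))) \<le> specnorm S M"
    using assms by (intro specnorm_ge) simp_all
  then have "sqrt (sqnorm_on S (mat_vec_on S M z) / t) \<le> specnorm S M"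
    using t unfolding mat_vec_on_scale sqnorm_on_scale by (simp add: power_divide)
  then have "sqnorm_on S (mat_vec_on S M z) / t \<le> (specnorm S M)\<^sup>2"
    by (rule sqrt_le_D)
  with t show ?thesis unfolding t_def by (simp add: divide_le_eq)
qed

lemma bilin_on_abs_le:
  assumes "finite S"
  shows "\<bar>bilin_on S M x y\<bar> \<le> sqrt (sqnorm_on S x) * specnorm S M * sqrt (sqnorm_on S y)"
proof -
  have "sqrt (sqnorm_on S (mat_vec_on S M y)) \<le> sqrt ((specnorm S M)\<^sup>2 * sqnorm_on S y)"
    using sqnorm_on_mat_vec_on_le[OF assms] by (rule real_sqrt_le_mono)
  also have "\<dots> = specnorm S M * sqrt (sqnorm_on S y)"
    using specnorm_nonneg[OF assms] by (simp add: real_sqrt_mult)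
  finally have My: "sqrt (sqnorm_on S (mat_vec_on S M y)) \<le> specnorm S M * sqrt (sqnorm_on S y)" .
  have "\<bar>bilin_on S M x y\<bar> \<le> sqrt (sqnorm_on S x) * sqrt (sqnorm_on S (mat_vec_on S M y))"
    unfolding bilin_on_eq_sum_mat_vec_on by (rule abs_sum_mult_le_sqnorm_on)
  also have "\<dots> \<le> sqrt (sqnorm_on S x) * (specnorm S M * sqrt (sqnorm_on S y))"
    using My by (intro mult_left_mono) (simp_all add: sqnorm_on_nonneg)
  finally show ?thesis by (simp add: mult_ac)
qed

lemma two_mult_le_half_sq_add:
  fixes x y :: real
  shows "2 * x * y \<le> (1/2) * x\<^sup>2 + 2 * y\<^sup>2"
  using zero_le_power2[of "x - 2 * y"] by (simp add: power2_eq_square algebra_simps)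

lemma bilin_on_affine_step:
  assumes fin: "finite S"
    and sym: "\<And>j m. j \<in> S \<Longrightarrow> m \<in> S \<Longrightarrow> W j m = W m j"
    and lyap: "\<And>j m. j \<in> S \<Longrightarrow> m \<in> S \<Longrightarrow> tmul3 S R W R j m - W j m = - (if j = m then 1 else 0)"
    and e': "\<And>j. j \<in> S \<Longrightarrow> e' j = mat_vec_on S R e j - \<beta> * mat_vec_on S I s j"
  shows "bilin_on S W e' e' - bilin_on S W e e
    = - sqnorm_on S e - 2 * \<beta> * bilin_on S (tmul3 S R W I) e s + \<beta>\<^sup>2 * bilin_on S (tmul3 S I W I) s s"
proof -
  let ?a = "mat_vec_on S R e" and ?b = "mat_vec_on S I s"
  have "bilin_on S W e' e' = bilin_on S W (\<lambda>j. ?a j - \<beta> * ?b j) (\<lambda>j. ?a j - \<beta> * ?b j)"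
    using e' by (intro bilin_on_cong) auto
  also have "\<dots> = bilin_on S W ?a ?a - \<beta> * bilin_on S W ?a ?b - \<beta> * (bilin_on S W ?b ?a - \<beta> * bilin_on S W ?b ?b)"
    by (simp add: bilin_on_diff_left bilin_on_diff_right)
  also have "bilin_on S W ?b ?a = bilin_on S W ?a ?b"
    using sym by (rule bilin_on_commute)
  also have "bilin_on S W ?a ?a = bilin_on S W e e - sqnorm_on S e"
    unfolding bilin_on_mat_vec_on using fin lyap by (rule bilin_on_lyapunov)
  finally show ?thesis
    by (simp add: bilin_on_mat_vec_on algebra_simps power2_eq_square)
qed

lemma bilin_on_affine_step_le:
  assumes fin: "finite S"
    and sym: "\<And>j m. j \<in> S \<Longrightarrow> m \<in> S \<Longrightarrow> W j m = W m j"
    and lyap: "\<And>j m. j \<in> S \<Longrightarrow> m \<in> S \<Longrightarrow> tmul3 S R W R j m - W j m = - (if j = m then 1 else 0)"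
    and e': "\<And>j. j \<in> S \<Longrightarrow> e' j = mat_vec_on S R e j - \<beta> * mat_vec_on S I s j"
  shows "bilin_on S W e' e' - bilin_on S W e e \<le> - (1/2) * sqnorm_on S e
     + \<beta>\<^sup>2 * (2 * (specnorm S (tmul3 S R W I))\<^sup>2 + specnorm S (tmul3 S I W I)) * sqnorm_on S s"
proof -
  define a where "a = sqrt (sqnorm_on S e)"
  define b where "b = sqrt (sqnorm_on S s)"
  define \<sigma> where "\<sigma> = specnorm S (tmul3 S R W I)"
  define \<tau> where "\<tau> = specnorm S (tmul3 S I W I)"
  have a2: "a\<^sup>2 = sqnorm_on S e" and b2: "b\<^sup>2 = sqnorm_on S s"
    unfolding a_def b_def by (simp_all add: sqnorm_on_nonneg)
  have "\<bar>bilin_on S (tmul3 S R W I) e s\<bar> \<le> a * \<sigma> * b"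
    unfolding a_def b_def \<sigma>_def by (rule bilin_on_abs_le[OF fin])
  moreover have "- 2 * \<beta> * bilin_on S (tmul3 S R W I) e s \<le> 2 * \<bar>\<beta>\<bar> * \<bar>bilin_on S (tmul3 S R W I) e s\<bar>"
    using abs_ge_self[of "- 2 * \<beta> * bilin_on S (tmul3 S R W I) e s"] by (simp add: abs_mult)
  ultimately have "- 2 * \<beta> * bilin_on S (tmul3 S R W I) e s \<le> 2 * \<bar>\<beta>\<bar> * (a * \<sigma> * b)"
    by (meson abs_ge_zero mult_left_mono order_trans zero_le_numeral zero_le_mult_iff)
  also have "\<dots> = 2 * a * (\<bar>\<beta>\<bar> * \<sigma> * b)"
    by (simp add: mult_ac)
  also have "\<dots> \<le> (1/2) * a\<^sup>2 + 2 * (\<bar>\<beta>\<bar> * \<sigma> * b)\<^sup>2"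
    by (rule two_mult_le_half_sq_add)
  finally have cross: "- 2 * \<beta> * bilin_on S (tmul3 S R W I) e s \<le> (1/2) * a\<^sup>2 + 2 * \<beta>\<^sup>2 * \<sigma>\<^sup>2 * b\<^sup>2"
    by (simp add: power_mult_distrib)
  have "bilin_on S (tmul3 S I W I) s s \<le> b * \<tau> * b"
    using bilin_on_abs_le[OF fin, of "tmul3 S I W I" s s] unfolding b_def \<tau>_def by linarith
  then have quad: "\<beta>\<^sup>2 * bilin_on S (tmul3 S I W I) s s \<le> \<beta>\<^sup>2 * \<tau> * b\<^sup>2"
    by (metis mult.assoc mult.commute mult_left_mono power2_eq_square zero_le_power2)
  have "\<beta>\<^sup>2 * (2 * \<sigma>\<^sup>2 + \<tau>) * sqnorm_on S s = 2 * \<beta>\<^sup>2 * \<sigma>\<^sup>2 * b\<^sup>2 + \<beta>\<^sup>2 * \<tau> * b\<^sup>2"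
    unfolding b2 by (simp add: algebra_simps)
  with cross quad a2 bilin_on_affine_step[OF assms] show ?thesis
    unfolding \<sigma>_def \<tau>_def by linarith
qed

section \<open>Coalitions and the Nash condition\<close>

lemma mem_Vc_iff [simp]: "a \<in> Vc coal i \<longleftrightarrow> coal a = i"
  by (simp add: Vc_def)

lemma nc_pos:
  fixes coal :: "'a::finite \<Rightarrow> 'c"
  assumes "Vc coal i \<noteq> {}"
  shows "0 < real (nc coal i)"
  using assms unfolding nc_def by (simp add: card_gt_0_iff)

lemma sum_UNIV_group_Vc:
  fixes coal :: "'a::finite \<Rightarrow> 'c::finite"
  shows "(\<Sum>j\<in>UNIV. F j) = (\<Sum>i\<in>UNIV. \<Sum>j\<in>Vc coal i. F j)"
  using sum.group[of "UNIV::'a set" "UNIV::'c set" coal F] by (simp add: Vc_def)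

lemma gderiv_unique:
  fixes f :: "real^'n \<Rightarrow> real"
  assumes "GDERIV f x :> D" and "GDERIV f x :> D'"
  shows "D = D'"
proof -
  have "(\<lambda>h. inner h D) = (\<lambda>h. inner h D')"
    using assms unfolding gderiv_def by (rule has_derivative_unique)
  then have "inner (D - D') D = inner (D - D') D'" by metis
  then have "inner (D - D') (D - D') = 0" by (simp add: inner_diff_right)
  then show ?thesis by simp
qed

lemma C2_has_grad:
  assumes "C2 f"
  shows "GDERIV f x :> grad f x"
proof -
  from assms obtain G where G: "\<And>x. GDERIV f x :> G x" unfolding C2_def by blast
  then have "grad f x = G x"
    unfolding grad_def by (blast intro: the_equality gderiv_unique)
  with G show ?thesis by simp
qed

lemma gcost_has_field_derivative:
  fixes coal :: "'a::finite \<Rightarrow> 'c"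
  assumes C2: "\<And>a. C2 (f a)"
  shows "((\<lambda>z. gcost coal f i (ys(i := z))) has_field_derivative
           (\<Sum>a\<in>Vc coal i. \<Sum>m\<in>Vc coal i. grad (f a) (stackc coal ys) $ m)) (at (ys i))"
proof -
  define x0 where "x0 = stackc coal ys"
  define ind :: "real^'a" where "ind = (\<chi> a. if coal a = i then 1 else 0)"
  have stack_upd: "stackc coal (ys(i := z)) = x0 + (z - ys i) *\<^sub>R ind" for z
    unfolding x0_def ind_def stackc_def by (auto simp: vec_eq_iff)
  have inner_ind: "inner ind D = (\<Sum>m\<in>Vc coal i. D $ m)" for D :: "real^'a"
  proof -
    have "inner ind D = (\<Sum>m\<in>UNIV. if coal m = i then D $ m else 0)"
      unfolding ind_def inner_vec_def by (intro sum.cong) auto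
    then show ?thesis by (simp add: sum.inter_filter[symmetric] Vc_def)
  qed
  have "((\<lambda>z. f a (x0 + (z - ys i) *\<^sub>R ind)) has_field_derivative inner ind (grad (f a) x0)) (at (ys i))"
    for a
  proof -
    have "(f a has_derivative (\<lambda>h. inner h (grad (f a) x0))) (at (x0 + (ys i - ys i) *\<^sub>R ind))"
      using C2_has_grad[OF C2] unfolding gderiv_def by simp
    moreover have "((\<lambda>z. x0 + (z - ys i) *\<^sub>R ind) has_derivative (\<lambda>t. t *\<^sub>R ind)) (at (ys i))"
      by (auto intro!: derivative_eq_intros)
    ultimately have "((\<lambda>z. f a (x0 + (z - ys i) *\<^sub>R ind)) has_derivative
                      (\<lambda>t. inner (t *\<^sub>R ind) (grad (f a) x0))) (at (ys i))"
      by (rule has_derivative_compose[rotated])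
    then show ?thesis
      unfolding has_field_derivative_def by (simp add: mult.commute[of _ "inner ind _"])
  qed
  then have "((\<lambda>z. \<Sum>a\<in>Vc coal i. f a (x0 + (z - ys i) *\<^sub>R ind)) has_field_derivative
              (\<Sum>a\<in>Vc coal i. inner ind (grad (f a) x0))) (at (ys i))"
    by (rule DERIV_sum)
  then show ?thesis
    unfolding gcost_def stack_upd inner_ind x0_def .
qed

lemma nash_eq_sum_grad_eq_0:
  fixes coal :: "'a::finite \<Rightarrow> 'c"
  assumes NE: "nash_eq coal f ys" and C2: "\<And>a. C2 (f a)"
  shows "(\<Sum>a\<in>Vc coal i. \<Sum>m\<in>Vc coal i. grad (f a) (stackc coal ys) $ m) = 0"
proof (rule DERIV_local_min[OF gcost_has_field_derivative[OF C2] zero_less_one])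
  show "\<forall>y. \<bar>ys i - y\<bar> < 1 \<longrightarrow> gcost coal f i (ys(i := ys i)) \<le> gcost coal f i (ys(i := y))"
    using NE unfolding nash_eq_def by simp
qed

section \<open>One step of the algorithm\<close>

definition psi_row_sum :: "('a \<Rightarrow> 'c) \<Rightarrow> ('a \<Rightarrow> 'a \<Rightarrow> real) \<Rightarrow> 'a \<Rightarrow> real" where
  "psi_row_sum coal ps j = (\<Sum>m\<in>Vc coal (coal j). ps j m)"

lemma trajectory_psi_column_sum:
  assumes traj: "trajectory coal E r c f \<alpha> xs xi psi" and wC: "weights_C coal E c"
  shows "(\<Sum>j\<in>Vc coal (coal l). psi k j l) = (\<Sum>j\<in>Vc coal (coal l). pderiv (f j) (xi k j) l)"
proof (induction k)
  case 0
  show ?case using traj unfolding trajectory_def by (intro sum.cong refl) auto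
next
  case (Suc k)
  let ?V = "Vc coal (coal l)"
  have "(\<Sum>j\<in>?V. psi (Suc k) j l) = (\<Sum>j\<in>?V. (\<Sum>m\<in>?V. c j m * psi k m l)
        + pderiv (f j) (xi (Suc k) j) l - pderiv (f j) (xi k j) l)"
    using traj unfolding trajectory_def by (intro sum.cong refl) auto
  also have "\<dots> = (\<Sum>j\<in>?V. \<Sum>m\<in>?V. c j m * psi k m l)
        + (\<Sum>j\<in>?V. pderiv (f j) (xi (Suc k) j) l) - (\<Sum>j\<in>?V. pderiv (f j) (xi k j) l)"
    by (simp add: sum.distrib sum_subtractf)
  also have "(\<Sum>j\<in>?V. \<Sum>m\<in>?V. c j m * psi k m l) = (\<Sum>m\<in>?V. (\<Sum>j\<in>?V. c j m) * psi k m l)"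
    by (subst sum.swap) (simp add: sum_distrib_right)
  also have "(\<Sum>m\<in>?V. (\<Sum>j\<in>?V. c j m) * psi k m l) = (\<Sum>m\<in>?V. psi k m l)"
  proof (intro sum.cong refl)
    fix m assume "m \<in> ?V"
    moreover have "(\<Sum>j\<in>Vc coal (coal m). c j m) = 1"
      using wC unfolding weights_C_def by blast
    ultimately show "(\<Sum>j\<in>?V. c j m) * psi k m l = psi k m l" by simp
  qed
  finally show ?case using Suc by simp
qed

lemma trajectory_xbar_Suc:
  assumes traj: "trajectory coal E r c f \<alpha> xs xi psi" and u: "left_perron coal r u"
  shows "xbar coal u (xs (Suc k)) i = xbar coal u (xs k) i
    - \<alpha> / real (nc coal i) * ((\<Sum>m\<in>Vc coal i. u m * psi_row_sum coal (psi k) m) / real (nc coal i))"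
proof -
  let ?S = "Vc coal i" and ?\<beta> = "\<alpha> / real (nc coal i)" and ?s = "psi_row_sum coal (psi k)"
  have step: "xs (Suc k) $ m = (\<Sum>q\<in>?S. r m q * xs k $ q) - ?\<beta> * ?s m" if "m \<in> ?S" for m
    using traj that unfolding trajectory_def psi_row_sum_def by simp
  have "(\<Sum>m\<in>?S. u m * xs (Suc k) $ m)
      = (\<Sum>m\<in>?S. u m * (\<Sum>q\<in>?S. r m q * xs k $ q) - ?\<beta> * (u m * ?s m))"
    using step by (intro sum.cong refl) (simp add: right_diff_distrib)
  also have "\<dots> = (\<Sum>m\<in>?S. u m * (\<Sum>q\<in>?S. r m q * xs k $ q)) - ?\<beta> * (\<Sum>m\<in>?S. u m * ?s m)"
    by (simp add: sum_subtractf sum_distrib_left)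
  also have "(\<Sum>m\<in>?S. u m * (\<Sum>q\<in>?S. r m q * xs k $ q)) = (\<Sum>q\<in>?S. (\<Sum>m\<in>?S. u m * r m q) * xs k $ q)"
    by (simp add: sum_distrib_left sum_distrib_right mult.assoc) (rule sum.swap)
  also have "\<dots> = (\<Sum>q\<in>?S. u q * xs k $ q)"
    using u unfolding left_perron_def by (intro sum.cong refl) auto
  finally show ?thesis
    unfolding xbar_def by (simp add: diff_divide_distrib)
qed

lemma mat_vec_on_Rbar_e_x:
  fixes coal :: "'a::finite \<Rightarrow> 'c"
  assumes wR: "weights_R coal E r" and u: "left_perron coal r u" and j: "j \<in> Vc coal i"
  shows "mat_vec_on (Vc coal i) (Rbar coal r u) (e_x coal u x) j
    = (\<Sum>q\<in>Vc coal i. r j q * x $ q) - xbar coal u x i"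
proof -
  let ?S = "Vc coal i" and ?n = "real (nc coal i)" and ?xb = "xbar coal u x i"
  have n: "0 < ?n" using j by (intro nc_pos) blast
  have centered: "(\<Sum>q\<in>?S. w q * (x $ q - ?xb)) = (\<Sum>q\<in>?S. w q * x $ q) - ?xb * (\<Sum>q\<in>?S. w q)" for w
    by (simp add: right_diff_distrib sum_subtractf sum_distrib_left mult.commute)
  have "mat_vec_on ?S (Rbar coal r u) (e_x coal u x) j
      = (\<Sum>q\<in>?S. r j q * (x $ q - ?xb)) - (\<Sum>q\<in>?S. u q * (x $ q - ?xb)) / ?n"
    using j unfolding mat_vec_on_def Rbar_def e_x_def
    by (simp add: left_diff_distrib sum_subtractf sum_divide_distrib)
  moreover have "(\<Sum>q\<in>?S. r j q) = 1"
    using wR j unfolding weights_R_def by auto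
  moreover have "(\<Sum>q\<in>?S. u q * (x $ q - ?xb)) = 0"
    using u n unfolding centered by (simp add: left_perron_def xbar_def)
  ultimately show ?thesis
    unfolding centered by simp
qed

lemma mat_vec_on_Ibar:
  fixes coal :: "'a::finite \<Rightarrow> 'c"
  assumes j: "j \<in> Vc coal i"
  shows "mat_vec_on (Vc coal i) (Ibar coal u) s j
    = s j - (\<Sum>q\<in>Vc coal i. u q * s q) / real (nc coal i)"
proof -
  have "mat_vec_on (Vc coal i) (Ibar coal u) s j
      = (\<Sum>q\<in>Vc coal i. (if j = q then s q else 0) - u q * s q / real (nc coal i))"
    using j unfolding mat_vec_on_def Ibar_def by (intro sum.cong refl) (simp add: algebra_simps)
  with j show ?thesis
    by (simp add: sum_subtractf sum_divide_distrib)
qed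

lemma trajectory_e_x_Suc:
  fixes coal :: "'a::finite \<Rightarrow> 'c"
  assumes traj: "trajectory coal E r c f \<alpha> xs xi psi" and wR: "weights_R coal E r"
    and u: "left_perron coal r u" and j: "j \<in> Vc coal i"
  shows "e_x coal u (xs (Suc k)) j
    = mat_vec_on (Vc coal i) (Rbar coal r u) (e_x coal u (xs k)) j
      - \<alpha> / real (nc coal i) * mat_vec_on (Vc coal i) (Ibar coal u) (psi_row_sum coal (psi k)) j"
proof -
  have "xs (Suc k) $ j = (\<Sum>q\<in>Vc coal i. r j q * xs k $ q) - \<alpha> / real (nc coal i) * psi_row_sum coal (psi k) j"
    using traj j unfolding trajectory_def psi_row_sum_def by simp
  moreover have "e_x coal u (xs (Suc k)) j = xs (Suc k) $ j - xbar coal u (xs (Suc k)) i"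
    using j by (simp add: e_x_def)
  ultimately show ?thesis
    unfolding mat_vec_on_Rbar_e_x[OF wR u j] mat_vec_on_Ibar[OF j] trajectory_xbar_Suc[OF traj u]
    by (simp add: right_diff_distrib)
qed

section \<open>Bounding the row sums of the trackers\<close>

definition e_psi_coal :: "('a \<Rightarrow> 'c) \<Rightarrow> ('a \<Rightarrow> real) \<Rightarrow> ('a \<Rightarrow> 'a \<Rightarrow> real) \<Rightarrow> 'c \<Rightarrow> real" where
  "e_psi_coal coal v ps i = (\<Sum>j\<in>Vc coal i. \<Sum>m\<in>Vc coal i. (ps j m - v j * psibar coal ps m)\<^sup>2)"

definition e_xi_coal :: "('a::finite \<Rightarrow> 'c) \<Rightarrow> ('a \<Rightarrow> real) \<Rightarrow> real^'a \<Rightarrow> ('a \<Rightarrow> real^'a) \<Rightarrow> 'c \<Rightarrow> real" where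
  "e_xi_coal coal u x xs i = (\<Sum>j\<in>Vc coal i. \<Sum>pq\<in>UNIV. (xs j $ pq - xbar coal u x (coal pq))\<^sup>2)"

lemma e_psi_coal_nonneg: "0 \<le> e_psi_coal coal v ps i"
  unfolding e_psi_coal_def by (simp add: sum_nonneg)

lemma e_xi_coal_nonneg: "0 \<le> e_xi_coal coal u x xs i"
  unfolding e_xi_coal_def by (simp add: sum_nonneg)

lemma e_xbar_sq_nonneg: "0 \<le> e_xbar_sq coal u x ys"
  unfolding e_xbar_sq_def by (simp add: sum_nonneg)

lemma e_psi_sq_eq_sum_e_psi_coal:
  fixes coal :: "'a::finite \<Rightarrow> 'c::finite"
  shows "e_psi_sq coal v ps = (\<Sum>i\<in>UNIV. e_psi_coal coal v ps i)"
  unfolding e_psi_sq_def e_psi_coal_def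
  by (subst sum_UNIV_group_Vc[where coal = coal]) (intro sum.cong refl; simp)

lemma e_xi_sq_eq_sum_e_xi_coal:
  fixes coal :: "'a::finite \<Rightarrow> 'c::finite"
  shows "e_xi_sq coal u x xs = (\<Sum>i\<in>UNIV. e_xi_coal coal u x xs i)"
  unfolding e_xi_sq_def e_xi_coal_def by (rule sum_UNIV_group_Vc)

lemma power2_add_le_weighted:
  fixes x y \<epsilon> :: real
  assumes "\<epsilon> > 0"
  shows "(x + y)\<^sup>2 \<le> (1 + \<epsilon>) * x\<^sup>2 + (1 + 1/\<epsilon>) * y\<^sup>2"
proof -
  have "2 * \<epsilon> * x * y \<le> \<epsilon>\<^sup>2 * x\<^sup>2 + y\<^sup>2"
    using zero_le_power2[of "\<epsilon> * x - y"] by (simp add: power2_eq_square algebra_simps)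
  then have "2 * x * y \<le> \<epsilon> * x\<^sup>2 + y\<^sup>2 / \<epsilon>"
    using assms by (simp add: field_simps power2_eq_square)
  then show ?thesis by (simp add: power2_eq_square algebra_simps add_divide_distrib)
qed

lemma sqnorm_on_add_scaled_le:
  fixes A v s :: "'a \<Rightarrow> real" and T n K P X :: real
  assumes fin: "finite S" and n: "n > 0"
    and s: "\<And>j. j \<in> S \<Longrightarrow> s j = A j + v j * T"
    and A: "sqnorm_on S A \<le> n * P" and vT: "T\<^sup>2 * sqnorm_on S v \<le> K * X"
    and K: "K \<ge> 0" and P: "P \<ge> 0" and X: "X \<ge> 0"
  shows "sqnorm_on S s \<le> (n + K) * (P + X)"
proof (cases "K = 0")
  case True
  moreover have "0 \<le> T\<^sup>2 * sqnorm_on S v"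
    by (simp add: sqnorm_on_nonneg)
  ultimately have "T\<^sup>2 * sqnorm_on S v = 0"
    using vT by simp
  then have "s j = A j" if "j \<in> S" for j
    using fin that s[OF that] by (auto simp: sqnorm_on_eq_0_iff)
  then have "sqnorm_on S s = sqnorm_on S A"
    unfolding sqnorm_on_def by simp
  with A True n P X show ?thesis
    by (smt (verit) mult_left_mono)
next
  case False
  with K have "K > 0" by simp
  define \<epsilon> where "\<epsilon> = K / n"
  have \<epsilon>: "\<epsilon> > 0" unfolding \<epsilon>_def using \<open>K > 0\<close> n by simp
  \<comment> \<open>the weight \<open>\<epsilon> = K / n\<close> balances the two terms exactly\<close>
  have "sqnorm_on S s \<le> (\<Sum>j\<in>S. (1 + \<epsilon>) * (A j)\<^sup>2 + (1 + 1/\<epsilon>) * (v j * T)\<^sup>2)"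
    unfolding sqnorm_on_def using s power2_add_le_weighted[OF \<epsilon>] by (intro sum_mono) auto
  also have "\<dots> = (1 + \<epsilon>) * sqnorm_on S A + (1 + 1/\<epsilon>) * (T\<^sup>2 * sqnorm_on S v)"
    unfolding sqnorm_on_def by (simp add: sum.distrib sum_distrib_left power_mult_distrib mult_ac)
  also have "\<dots> \<le> (1 + \<epsilon>) * (n * P) + (1 + 1/\<epsilon>) * (K * X)"
    using A vT \<epsilon> by (intro add_mono mult_left_mono) auto
  also have "\<dots> = (n + K) * (P + X)"
    unfolding \<epsilon>_def using n \<open>K > 0\<close> by (simp add: field_simps)
  finally show ?thesis .
qed

lemma sq_sum_le_mult_sqnorm_on:
  fixes d a b :: "'b \<Rightarrow> real" and c :: real
  assumes c: "c \<ge> 0" and d: "\<And>j. j \<in> S \<Longrightarrow> (d j)\<^sup>2 \<le> c * (a j)\<^sup>2 * (b j)\<^sup>2"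
  shows "(\<Sum>j\<in>S. d j)\<^sup>2 \<le> c * sqnorm_on S a * sqnorm_on S b"
proof -
  have "\<bar>d j\<bar> \<le> (sqrt c * \<bar>a j\<bar>) * \<bar>b j\<bar>" if "j \<in> S" for j
    using real_sqrt_le_mono[OF d[OF that]] by (simp add: real_sqrt_mult)
  then have "\<bar>\<Sum>j\<in>S. d j\<bar> \<le> (\<Sum>j\<in>S. (sqrt c * \<bar>a j\<bar>) * \<bar>b j\<bar>)"
    by (intro order_trans[OF sum_abs sum_mono])
  then have "(\<Sum>j\<in>S. d j)\<^sup>2 \<le> (\<Sum>j\<in>S. (sqrt c * \<bar>a j\<bar>) * \<bar>b j\<bar>)\<^sup>2"
    by (metis abs_ge_zero power2_abs power_mono)
  also have "\<dots> \<le> (\<Sum>j\<in>S. (sqrt c * \<bar>a j\<bar>)\<^sup>2) * (\<Sum>j\<in>S. \<bar>b j\<bar>\<^sup>2)"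
    by (rule Cauchy_Schwarz_ineq_sum)
  also have "\<dots> = c * sqnorm_on S a * sqnorm_on S b"
    using c by (simp add: sqnorm_on_def power_mult_distrib sum_distrib_left)
  finally show ?thesis .
qed

lemma power2_norm_vec: "(norm (w::real^'n))\<^sup>2 = (\<Sum>m\<in>UNIV. (w $ m)\<^sup>2)"
  unfolding power2_norm_eq_inner inner_vec_def by (simp add: power2_eq_square)

lemma sq_sum_grad_gap_le:
  fixes f :: "'b \<Rightarrow> real^'n \<Rightarrow> real" and M :: "'n set"
  assumes lip: "\<And>j. j \<in> S \<Longrightarrow> grad_lipschitz (f j) (l j)"
  shows "(\<Sum>j\<in>S. \<Sum>m\<in>M. grad (f j) (z j) $ m - grad (f j) y $ m)\<^sup>2
    \<le> real (card M) * sqnorm_on S l * (\<Sum>j\<in>S. (norm (z j - y))\<^sup>2)"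
  unfolding sqnorm_on_def[of S "\<lambda>j. norm (z j - y)", symmetric]
proof (rule sq_sum_le_mult_sqnorm_on)
  fix j assume "j \<in> S"
  define w where "w = grad (f j) (z j) - grad (f j) y"
  have "(\<Sum>m\<in>M. w $ m)\<^sup>2 \<le> real (card M) * (\<Sum>m\<in>M. (w $ m)\<^sup>2)"
    by (rule sq_sum_le_card_mult_sqnorm_on[unfolded sqnorm_on_def])
  also have "(\<Sum>m\<in>M. (w $ m)\<^sup>2) \<le> (norm w)\<^sup>2"
    unfolding power2_norm_vec by (intro sum_mono2) auto
  also have "(norm w)\<^sup>2 \<le> (l j * norm (z j - y))\<^sup>2"
    using lip[OF \<open>j \<in> S\<close>] unfolding grad_lipschitz_def w_def by (intro power_mono) auto
  finally show "(\<Sum>m\<in>M. grad (f j) (z j) $ m - grad (f j) y $ m)\<^sup>2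
      \<le> real (card M) * (l j)\<^sup>2 * (norm (z j - y))\<^sup>2"
    unfolding w_def by (simp add: mult_left_mono power_mult_distrib mult.assoc)
qed simp

lemma sum_agents_le_Max_nc:
  fixes coal :: "'a::finite \<Rightarrow> 'c::finite" and F :: "'c \<Rightarrow> real"
  assumes F: "\<And>i. F i \<ge> 0"
  shows "(\<Sum>pq\<in>UNIV. F (coal pq)) \<le> real (Max (range (nc coal))) * (\<Sum>i\<in>UNIV. F i)"
proof -
  have "(\<Sum>pq\<in>UNIV. F (coal pq)) = (\<Sum>i\<in>UNIV. real (nc coal i) * F i)"
    by (subst sum_UNIV_group_Vc[where coal = coal]) (simp add: nc_def)
  also have "\<dots> \<le> (\<Sum>i\<in>UNIV. real (Max (range (nc coal))) * F i)"
    by (intro sum_mono mult_right_mono F) simp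
  finally show ?thesis by (simp add: sum_distrib_left)
qed

lemma sum_norm_sq_dist_stackc_le:
  fixes coal :: "'a::finite \<Rightarrow> 'c::finite" and z :: "'a \<Rightarrow> real^'a"
  assumes ne: "Vc coal i \<noteq> {}"
  shows "(\<Sum>j\<in>Vc coal i. (norm (z j - stackc coal ys))\<^sup>2)
    \<le> (1 + real (nc coal i) * real (Max (range (nc coal)))) * (e_xi_coal coal u x z i + e_xbar_sq coal u x ys)"
proof -
  let ?n = "real (nc coal i)" and ?M = "real (Max (range (nc coal)))"
  let ?F = "\<lambda>i'. (xbar coal u x i' - ys i')\<^sup>2"
  \<comment> \<open>this choice of \<open>\<delta>\<close> makes \<open>n (1 + 1/\<delta>) M = 1 + \<delta>\<close>\<close>
  define \<delta> where "\<delta> = ?n * ?M"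
  have n_pos: "0 < ?n" using ne by (rule nc_pos)
  moreover have "?n \<le> ?M" by simp
  ultimately have M_pos: "0 < ?M" by linarith
  with n_pos have \<delta>: "\<delta> > 0" unfolding \<delta>_def by simp
  have pointwise: "(norm (z j - stackc coal ys))\<^sup>2
      \<le> (1 + \<delta>) * (\<Sum>pq\<in>UNIV. (z j $ pq - xbar coal u x (coal pq))\<^sup>2) + (1 + 1/\<delta>) * (?M * e_xbar_sq coal u x ys)"
    for j
  proof -
    have "(norm (z j - stackc coal ys))\<^sup>2
        = (\<Sum>pq\<in>UNIV. ((z j $ pq - xbar coal u x (coal pq)) + (xbar coal u x (coal pq) - ys (coal pq)))\<^sup>2)"
      unfolding power2_norm_vec stackc_def by simp
    also have "\<dots> \<le> (1 + \<delta>) * (\<Sum>pq\<in>UNIV. (z j $ pq - xbar coal u x (coal pq))\<^sup>2)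
        + (1 + 1/\<delta>) * (\<Sum>pq\<in>UNIV. ?F (coal pq))"
      unfolding sum_distrib_left sum.distrib[symmetric] by (intro sum_mono power2_add_le_weighted \<delta>)
    also have "(\<Sum>pq\<in>UNIV. ?F (coal pq)) \<le> ?M * e_xbar_sq coal u x ys"
      unfolding e_xbar_sq_def by (rule sum_agents_le_Max_nc) simp
    finally show ?thesis
      using \<delta> by (smt (verit) mult_left_mono divide_nonneg_nonneg)
  qed
  have "(\<Sum>j\<in>Vc coal i. (norm (z j - stackc coal ys))\<^sup>2)
      \<le> (\<Sum>j\<in>Vc coal i. (1 + \<delta>) * (\<Sum>pq\<in>UNIV. (z j $ pq - xbar coal u x (coal pq))\<^sup>2)
           + (1 + 1/\<delta>) * (?M * e_xbar_sq coal u x ys))"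
    by (intro sum_mono pointwise)
  also have "\<dots> = (1 + \<delta>) * e_xi_coal coal u x z i + ?n * (1 + 1/\<delta>) * ?M * e_xbar_sq coal u x ys"
    unfolding e_xi_coal_def nc_def by (simp add: sum.distrib sum_distrib_left mult_ac)
  also have "?n * (1 + 1/\<delta>) * ?M = 1 + \<delta>"
    using n_pos M_pos unfolding \<delta>_def by (simp add: field_simps)
  finally show ?thesis
    unfolding \<delta>_def by (simp add: distrib_left)
qed

lemma trajectory_sum_psibar:
  fixes coal :: "'a::finite \<Rightarrow> 'c"
  assumes NE: "nash_eq coal f ys" and C2: "\<And>a. C2 (f a)" and wC: "weights_C coal E c"
    and traj: "trajectory coal E r c f \<alpha> xs xi psi" and ne: "Vc coal i \<noteq> {}"
  shows "real (nc coal i) * (\<Sum>m\<in>Vc coal i. psibar coal (psi k) m)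
    = (\<Sum>j\<in>Vc coal i. \<Sum>m\<in>Vc coal i. grad (f j) (xi k j) $ m - grad (f j) (stackc coal ys) $ m)"
proof -
  let ?S = "Vc coal i"
  have n: "real (nc coal i) \<noteq> 0" using nc_pos[OF ne] by simp
  have "real (nc coal i) * (\<Sum>m\<in>?S. psibar coal (psi k) m) = (\<Sum>m\<in>?S. \<Sum>j\<in>?S. psi k j m)"
    unfolding sum_distrib_left psibar_def using n by (intro sum.cong refl) simp
  also have "\<dots> = (\<Sum>m\<in>?S. \<Sum>j\<in>?S. grad (f j) (xi k j) $ m)"
  proof (rule sum.cong[OF refl])
    fix m assume "m \<in> ?S"
    then have "Vc coal (coal m) = ?S" by simp
    with trajectory_psi_column_sum[OF traj wC, where k = k and l = m]
    show "(\<Sum>j\<in>?S. psi k j m) = (\<Sum>j\<in>?S. grad (f j) (xi k j) $ m)"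
      by (simp add: pderiv_def)
  qed
  also have "\<dots> = (\<Sum>j\<in>?S. \<Sum>m\<in>?S. grad (f j) (xi k j) $ m)"
    by (rule sum.swap)
  also have "\<dots> = (\<Sum>j\<in>?S. \<Sum>m\<in>?S. grad (f j) (xi k j) $ m) - (\<Sum>j\<in>?S. \<Sum>m\<in>?S. grad (f j) (stackc coal ys) $ m)"
    using nash_eq_sum_grad_eq_0[OF NE C2] by simp
  finally show ?thesis
    by (simp add: sum_subtractf)
qed

lemma trajectory_sum_psibar_sq_le:
  fixes coal :: "'a::finite \<Rightarrow> 'c::finite"
  assumes NE: "nash_eq coal f ys" and C2: "\<And>a. C2 (f a)" and lip: "\<And>a. grad_lipschitz (f a) (l a)"
    and wC: "weights_C coal E c" and traj: "trajectory coal E r c f \<alpha> xs xi psi"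
    and ne: "Vc coal i \<noteq> {}"
  shows "(\<Sum>m\<in>Vc coal i. psibar coal (psi k) m)\<^sup>2
    \<le> (1 / real (nc coal i) + real (Max (range (nc coal)))) * sqnorm_on (Vc coal i) l
       * (e_xi_coal coal u (xs k) (xi k) i + e_xbar_sq coal u (xs k) ys)"
proof -
  let ?S = "Vc coal i" and ?n = "real (nc coal i)" and ?M = "real (Max (range (nc coal)))"
  let ?L = "sqnorm_on ?S l" and ?Z = "e_xi_coal coal u (xs k) (xi k) i + e_xbar_sq coal u (xs k) ys"
  have n: "0 < ?n" using ne by (rule nc_pos)
  have "(?n * (\<Sum>m\<in>?S. psibar coal (psi k) m))\<^sup>2
      = (\<Sum>j\<in>?S. \<Sum>m\<in>?S. grad (f j) (xi k j) $ m - grad (f j) (stackc coal ys) $ m)\<^sup>2"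
    by (simp only: trajectory_sum_psibar[OF NE C2 wC traj ne])
  also have "\<dots> \<le> ?n * ?L * (\<Sum>j\<in>?S. (norm (xi k j - stackc coal ys))\<^sup>2)"
    using sq_sum_grad_gap_le[where S = ?S and M = ?S and z = "xi k" and y = "stackc coal ys"] lip
    unfolding nc_def by blast
  also have "\<dots> \<le> ?n * ?L * ((1 + ?n * ?M) * ?Z)"
    using n sqnorm_on_nonneg[of ?S l]
    by (intro mult_left_mono sum_norm_sq_dist_stackc_le ne) simp
  also have "\<dots> = ?n\<^sup>2 * ((1 / ?n + ?M) * ?L * ?Z)"
    using n by (simp add: field_simps power2_eq_square)
  finally have "?n\<^sup>2 * (\<Sum>m\<in>?S. psibar coal (psi k) m)\<^sup>2 \<le> ?n\<^sup>2 * ((1 / ?n + ?M) * ?L * ?Z)"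
    by (simp add: power_mult_distrib)
  with n show ?thesis
    by (simp add: mult_left_le_imp_le)
qed

lemma sqnorm_on_psi_dev_le:
  fixes coal :: "'a::finite \<Rightarrow> 'c"
  shows "sqnorm_on (Vc coal i) (\<lambda>j. \<Sum>m\<in>Vc coal i. ps j m - v j * psibar coal ps m)
    \<le> real (nc coal i) * e_psi_coal coal v ps i"
proof -
  have "sqnorm_on (Vc coal i) (\<lambda>j. \<Sum>m\<in>Vc coal i. ps j m - v j * psibar coal ps m)
      \<le> (\<Sum>j\<in>Vc coal i. real (card (Vc coal i)) * (\<Sum>m\<in>Vc coal i. (ps j m - v j * psibar coal ps m)\<^sup>2))"
    unfolding sqnorm_on_def by (intro sum_mono sq_sum_le_card_mult_sqnorm_on[unfolded sqnorm_on_def])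
  then show ?thesis
    by (simp add: e_psi_coal_def nc_def sum_distrib_left)
qed

lemma trajectory_psi_row_sum_sqnorm_le:
  fixes coal :: "'a::finite \<Rightarrow> 'c::finite"
  assumes NE: "nash_eq coal f ys" and C2: "\<And>a. C2 (f a)" and lip: "\<And>a. grad_lipschitz (f a) (l a)"
    and wC: "weights_C coal E c" and traj: "trajectory coal E r c f \<alpha> xs xi psi"
    and ne: "Vc coal i \<noteq> {}"
  shows "sqnorm_on (Vc coal i) (psi_row_sum coal (psi k))
    \<le> b0 coal v l i * (e_psi_coal coal v (psi k) i
         + (e_xi_coal coal u (xs k) (xi k) i + e_xbar_sq coal u (xs k) ys))"
proof -
  let ?S = "Vc coal i" and ?n = "real (nc coal i)" and ?M = "real (Max (range (nc coal)))"
  let ?T = "\<Sum>m\<in>?S. psibar coal (psi k) m"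
  define K where "K = (1 / ?n + ?M) * sqnorm_on ?S v * sqnorm_on ?S l"
  have n: "0 < ?n" using ne by (rule nc_pos)
  have "b0 coal v l i = ?n + K"
    unfolding b0_def K_def sqnorm_on_def by simp
  moreover have "sqnorm_on ?S (psi_row_sum coal (psi k)) \<le> (?n + K) * (e_psi_coal coal v (psi k) i
         + (e_xi_coal coal u (xs k) (xi k) i + e_xbar_sq coal u (xs k) ys))"
  proof (rule sqnorm_on_add_scaled_le[OF _ n])
    show "psi_row_sum coal (psi k) j = (\<Sum>m\<in>?S. psi k j m - v j * psibar coal (psi k) m) + v j * ?T"
      if "j \<in> ?S" for j
      using that by (simp add: psi_row_sum_def sum_subtractf sum_distrib_left)
    show "?T\<^sup>2 * sqnorm_on ?S v \<le> K * (e_xi_coal coal u (xs k) (xi k) i + e_xbar_sq coal u (xs k) ys)"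
      using mult_right_mono[OF trajectory_sum_psibar_sq_le[OF NE C2 lip wC traj ne, where u = u and k = k]
          sqnorm_on_nonneg[of ?S v]]
      unfolding K_def by (simp add: mult_ac)
    show "0 \<le> K"
      unfolding K_def using n by (simp add: sqnorm_on_nonneg)
  qed (simp_all add: sqnorm_on_psi_dev_le e_psi_coal_nonneg e_xi_coal_nonneg e_xbar_sq_nonneg)
  ultimately show ?thesis by simp
qed

section \<open>Decrease of the Lyapunov function\<close>

lemma Vx_eq_sum_bilin_on:
  "Vx coal u W x = (\<Sum>i\<in>UNIV. bilin_on (Vc coal i) W (e_x coal u x) (e_x coal u x))"
  unfolding Vx_def bilin_on_def ..

lemma trajectory_bilin_on_e_x_step_le:
  fixes coal :: "'a::finite \<Rightarrow> 'c::finite"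
  assumes ne: "Vc coal i \<noteq> {}"
    and C2: "\<And>a. C2 (f a)" and lip: "\<And>a. grad_lipschitz (f a) (l a)" and NE: "nash_eq coal f ys"
    and wR: "weights_R coal E r" and wC: "weights_C coal E c"
    and traj: "trajectory coal E r c f \<alpha> xs xi psi"
    and u: "left_perron coal r u" and W: "lyap_sol coal r u W"
  shows "bilin_on (Vc coal i) W (e_x coal u (xs (Suc k))) (e_x coal u (xs (Suc k)))
      - bilin_on (Vc coal i) W (e_x coal u (xs k)) (e_x coal u (xs k))
    \<le> - (1/2) * sqnorm_on (Vc coal i) (e_x coal u (xs k))
      + \<alpha>\<^sup>2 * b3 coal r u v W l i * (e_psi_coal coal v (psi k) i
          + (e_xi_coal coal u (xs k) (xi k) i + e_xbar_sq coal u (xs k) ys))"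
proof -
  let ?S = "Vc coal i" and ?n = "real (nc coal i)" and ?s = "psi_row_sum coal (psi k)"
  let ?Z = "e_psi_coal coal v (psi k) i + (e_xi_coal coal u (xs k) (xi k) i + e_xbar_sq coal u (xs k) ys)"
  define C where "C = 2 * (specnorm ?S (tmul3 ?S (Rbar coal r u) W (Ibar coal u)))\<^sup>2
      + specnorm ?S (tmul3 ?S (Ibar coal u) W (Ibar coal u))"
  have "bilin_on ?S W (e_x coal u (xs (Suc k))) (e_x coal u (xs (Suc k))) - bilin_on ?S W (e_x coal u (xs k)) (e_x coal u (xs k))
      \<le> - (1/2) * sqnorm_on ?S (e_x coal u (xs k)) + (\<alpha> / ?n)\<^sup>2 * C * sqnorm_on ?S ?s"
    unfolding C_def
  proof (rule bilin_on_affine_step_le)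
    show "W j m = W m j" if "j \<in> ?S" "m \<in> ?S" for j m
      using W that unfolding lyap_sol_def by blast
    show "tmul3 ?S (Rbar coal r u) W (Rbar coal r u) j m - W j m = - (if j = m then 1 else 0)"
      if "j \<in> ?S" "m \<in> ?S" for j m
      using W that unfolding lyap_sol_def tmul3_def by blast
  qed (simp_all add: trajectory_e_x_Suc[OF traj wR u])
  also have "(\<alpha> / ?n)\<^sup>2 * C * sqnorm_on ?S ?s \<le> (\<alpha> / ?n)\<^sup>2 * C * (b0 coal v l i * ?Z)"
    using trajectory_psi_row_sum_sqnorm_le[OF NE C2 lip wC traj ne]
    by (intro mult_left_mono) (simp_all add: C_def specnorm_nonneg)
  also have "(\<alpha> / ?n)\<^sup>2 * C * (b0 coal v l i * ?Z) = \<alpha>\<^sup>2 * b3 coal r u v W l i * ?Z"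
    unfolding b3_def C_def by (simp add: power_divide)
  finally show ?thesis by simp
qed

theorem lemma4:
  fixes coal :: "'a::finite \<Rightarrow> 'c::finite"
    and E :: "('a \<times> 'a) set"
    and f :: "'a \<Rightarrow> real^'a \<Rightarrow> real"
    and l :: "'a \<Rightarrow> real"
    and ys :: "'c \<Rightarrow> real"
    and r c :: "'a \<Rightarrow> 'a \<Rightarrow> real"
    and u v :: "'a \<Rightarrow> real"
    and W :: "'a \<Rightarrow> 'a \<Rightarrow> real"
    and \<alpha> :: real
    and xs :: "nat \<Rightarrow> real^'a"
    and xi :: "nat \<Rightarrow> 'a \<Rightarrow> real^'a"
    and psi :: "nat \<Rightarrow> 'a \<Rightarrow> 'a \<Rightarrow> real"
    and k :: nat
  assumes coal_nonempty: "\<And>i. Vc coal i \<noteq> {}"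
    and A1: "strongly_connected_on UNIV E" "\<And>i. strongly_connected_on (Vc coal i) E"
    and A2: "\<And>a. convex_on UNIV (f a)" "\<And>a. C2 (f a)" "\<And>a. grad_lipschitz (f a) (l a)"
    and NE: "nash_eq coal f ys"
    and wR: "weights_R coal E r" and wC: "weights_C coal E c"
    and alpha: "\<alpha> > 0"
    and traj: "trajectory coal E r c f \<alpha> xs xi psi"
    and u: "left_perron coal r u" and v: "right_perron coal c v"
    and W: "lyap_sol coal r u W"
  shows "Vx coal u W (xs (Suc k)) - Vx coal u W (xs k)
     \<le> - (1/2) * (\<Sum>j\<in>UNIV. (e_x coal u (xs k) j)\<^sup>2)
       + \<alpha>\<^sup>2 * Max (range (b3 coal r u v W l))
         * (e_psi_sq coal v (psi k) + e_xi_sq coal u (xs k) (xi k)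
            + real CARD('c) * e_xbar_sq coal u (xs k) ys)"
proof -
  let ?e = "e_x coal u (xs k)" and ?e' = "e_x coal u (xs (Suc k))" and ?B = "Max (range (b3 coal r u v W l))"
  let ?Z = "\<lambda>i. e_psi_coal coal v (psi k) i + (e_xi_coal coal u (xs k) (xi k) i + e_xbar_sq coal u (xs k) ys)"
  have "bilin_on (Vc coal i) W ?e' ?e' - bilin_on (Vc coal i) W ?e ?e
      \<le> - (1/2) * sqnorm_on (Vc coal i) ?e + \<alpha>\<^sup>2 * ?B * ?Z i" for i
  proof -
    have "b3 coal r u v W l i \<le> ?B" by simp
    then have "\<alpha>\<^sup>2 * b3 coal r u v W l i * ?Z i \<le> \<alpha>\<^sup>2 * ?B * ?Z i"
      by (intro mult_right_mono mult_left_mono) (simp_all add: e_psi_coal_nonneg e_xi_coal_nonneg e_xbar_sq_nonneg)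
    with trajectory_bilin_on_e_x_step_le[OF coal_nonempty A2(2,3) NE wR wC traj u W, of i k v]
    show ?thesis by linarith
  qed
  then have "Vx coal u W (xs (Suc k)) - Vx coal u W (xs k)
      \<le> (\<Sum>i\<in>UNIV. - (1/2) * sqnorm_on (Vc coal i) ?e + \<alpha>\<^sup>2 * ?B * ?Z i)"
    unfolding Vx_eq_sum_bilin_on sum_subtractf[symmetric] by (rule sum_mono)
  also have "\<dots> = - (1/2) * (\<Sum>i\<in>UNIV. sqnorm_on (Vc coal i) ?e) + \<alpha>\<^sup>2 * ?B * (\<Sum>i\<in>UNIV. ?Z i)"
    by (simp only: sum.distrib sum_distrib_left[symmetric])
  also have "(\<Sum>i\<in>UNIV. sqnorm_on (Vc coal i) ?e) = (\<Sum>j\<in>UNIV. (?e j)\<^sup>2)"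
    unfolding sqnorm_on_def by (rule sum_UNIV_group_Vc[symmetric])
  also have "(\<Sum>i\<in>UNIV. ?Z i)
      = e_psi_sq coal v (psi k) + e_xi_sq coal u (xs k) (xi k) + real CARD('c) * e_xbar_sq coal u (xs k) ys"
    by (simp add: sum.distrib e_psi_sq_eq_sum_e_psi_coal e_xi_sq_eq_sum_e_xi_coal)
  finally show ?thesis .
qed

end
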